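(* Every bounded continuous valuation $\nu$ on Johnstone's dcpo $\mathcal J$ (with the Scott topology) is point-continuous. Moreover, there exist a discrete valuation $\theta$ on $\mathcal J$ and a nonnegative real number $r$ such that $\nu=\theta+r\mu$, where $\mu(U)=1$ for every non-empty Scott-open $U\subseteq\mathcal J$ and $\mu(\emptyset)=0$.
   Context: Johnstone's dcpo: $\mathcal J=\mathbb N\times(\mathbb N\cup\{\infty\})$ ordered by $(a,b)\le(c,d)$ iff either ($a=c$ and $b\le d$) or ($d=\infty$ and $b\le c$). A valuation on a space $X$ is a map $\nu:\mathcal OX\to[0,\infty]$ with $\nu(\emptyset)=0$, monotone and modular ($\nu(U)+\nu(V)=\nu(U\cup V)+\nu(U\cap V)$); continuous if it preserves directed suprema of open sets; bounded if $\nu(X)<\infty$. $\delta_x$ is the Dirac valuation at $x$. A discrete valuation is one of the form $\sum_{i=1}^\infty r_i\delta_{x_i}=\sup_n\sum_{i=1}^n r_i\delta_{x_i}$ with $r_i\in[0,\infty)$. A valuation $\nu$ is point-continuous if for every open $U$ and every real $r$ with $0\le r<\nu(U)$ there is a finite subset $A\subseteq U$ such that $\nu(V)>r$ for every open $V\supseteq A$. *)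

theory Defs
  imports "HOL-Analysis.Analysis" "HOL-Library.Extended_Nat" "HOL-Library.Extended_Nonnegative_Real"
begin

type_synonym jpt = "nat \<times> enat"

definition jle :: "jpt \<Rightarrow> jpt \<Rightarrow> bool" where
  "jle p q \<longleftrightarrow> (case p of (a, b) \<Rightarrow> case q of (c, d) \<Rightarrow>
      (a = c \<and> b \<le> d) \<or> (d = \<infinity> \<and> b \<le> enat c))"

definition j_directed :: "jpt set \<Rightarrow> bool" where
  "j_directed D \<longleftrightarrow> D \<noteq> {} \<and> (\<forall>x\<in>D. \<forall>y\<in>D. \<exists>z\<in>D. jle x z \<and> jle y z)"

definition j_is_lub :: "jpt set \<Rightarrow> jpt \<Rightarrow> bool" where
  "j_is_lub D s \<longleftrightarrow> (\<forall>x\<in>D. jle x s) \<and> (\<forall>u. (\<forall>x\<in>D. jle x u) \<longrightarrow> jle s u)"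

definition scott_open :: "jpt set \<Rightarrow> bool" where
  "scott_open U \<longleftrightarrow> (\<forall>x y. x \<in> U \<and> jle x y \<longrightarrow> y \<in> U) \<and>
     (\<forall>D s. j_directed D \<and> j_is_lub D s \<and> s \<in> U \<longrightarrow> D \<inter> U \<noteq> {})"

text \<open>Valuations on the Scott topology (only values on open sets matter).\<close>
definition valuation :: "(jpt set \<Rightarrow> ennreal) \<Rightarrow> bool" where
  "valuation \<nu> \<longleftrightarrow> \<nu> {} = 0 \<and>
     (\<forall>U V. scott_open U \<and> scott_open V \<and> U \<subseteq> V \<longrightarrow> \<nu> U \<le> \<nu> V) \<and>
     (\<forall>U V. scott_open U \<and> scott_open V \<longrightarrow> \<nu> U + \<nu> V = \<nu> (U \<union> V) + \<nu> (U \<inter> V))"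

definition continuous_valuation :: "(jpt set \<Rightarrow> ennreal) \<Rightarrow> bool" where
  "continuous_valuation \<nu> \<longleftrightarrow> valuation \<nu> \<and>
     (\<forall>\<D>. \<D> \<noteq> {} \<and> (\<forall>U\<in>\<D>. scott_open U) \<and>
          (\<forall>U\<in>\<D>. \<forall>V\<in>\<D>. \<exists>W\<in>\<D>. U \<subseteq> W \<and> V \<subseteq> W)
        \<longrightarrow> \<nu> (\<Union>\<D>) = (SUP U\<in>\<D>. \<nu> U))"

definition bounded_valuation :: "(jpt set \<Rightarrow> ennreal) \<Rightarrow> bool" where
  "bounded_valuation \<nu> \<longleftrightarrow> \<nu> UNIV < \<infinity>"

definition point_continuous :: "(jpt set \<Rightarrow> ennreal) \<Rightarrow> bool" where
  "point_continuous \<nu> \<longleftrightarrow> (\<forall>U r. scott_open U \<and> 0 \<le> r \<and> ennreal r < \<nu> U \<longrightarrow>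
     (\<exists>A. finite A \<and> A \<subseteq> U \<and> (\<forall>V. scott_open V \<and> A \<subseteq> V \<longrightarrow> \<nu> V > ennreal r)))"

definition dirac :: "jpt \<Rightarrow> jpt set \<Rightarrow> ennreal" where
  "dirac x U = (if x \<in> U then 1 else 0)"

definition discrete_valuation :: "(jpt set \<Rightarrow> ennreal) \<Rightarrow> bool" where
  "discrete_valuation \<theta> \<longleftrightarrow> (\<exists>(r::nat \<Rightarrow> real) (x::nat \<Rightarrow> jpt). (\<forall>i. 0 \<le> r i) \<and>
     (\<forall>U. \<theta> U = (\<Sum>i. ennreal (r i) * dirac (x i) U)))"

definition mu_J :: "jpt set \<Rightarrow> ennreal" where
  "mu_J U = (if U = {} then 0 else 1)"

end

(*
  The Scott-open subsets of J are the sets that are upward closed in every column, contain with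
  each point (a, b) the top (c, inf) of every column c >= b, and contain a finite point of every
  column whose top they contain.

  Removing from an open set a point (a, n) that is lowest in its column leaves an open set, and
  by modularity the loss of mass is the same for all open sets; so is the gain from adding a
  column tail {a} x [n, inf] to an open set disjoint from column a. These quantities are the
  weights of the finite points, and the limit of the tail gains as n tends to infinity is the
  weight of (a, inf). For the discrete valuation theta carried by these weights,
  nu U = nu V + theta (U - V) whenever V is a nonempty open subset of the open set U: first the
  finitely many missing column tails are added to V, after which U exceeds V by finitely many
  points in each column, and these are handled by removal steps and continuity of nu.
  Taking U = J gives nu = theta + r mu with r = nu J - theta J >= 0, and point-continuity
  follows because theta is inner regular with respect to finite sets.
*)
theory Submission
  imports Defs
begin

section \<open>Scott-open subsets of Johnstone's dcpo\<close>

lemma jle_iff [simp]: "jle (a, b) (c, d) \<longleftrightarrow> a = c \<and> b \<le> d \<or> d = \<infinity> \<and> b \<le> enat c"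
  by (simp add: jle_def)

lemma jle_antisym: "jle x y \<Longrightarrow> jle y x \<Longrightarrow> x = y"
  by (cases x; cases y) auto

lemma infinity_if_enat_le_all: "(\<And>k. enat k \<le> d) \<Longrightarrow> d = \<infinity>"
  by (metis enat_ord_simps(2) lessI not_le enat.exhaust)

lemma j_directed_column: "j_directed (range (\<lambda>k. (c, enat k)))"
  unfolding j_directed_def by (auto intro: max.cobounded1 max.cobounded2)

lemma j_is_lub_column: "j_is_lub (range (\<lambda>k. (c, enat k))) (c, \<infinity>)"
  unfolding j_is_lub_def
proof (intro conjI allI impI)
  fix u assume ub: "\<forall>x\<in>range (\<lambda>k. (c, enat k)). jle x u"
  obtain a d where u: "u = (a, d)" by fastforce
  have "jle (c, enat (Suc a)) u" using ub by blast
  then have "a = c" using u by auto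
  have "enat k \<le> d" for k using ub u \<open>a = c\<close> by auto
  then have "d = \<infinity>" by (rule infinity_if_enat_le_all)
  then show "jle (c, \<infinity>) u" using u \<open>a = c\<close> by simp
qed auto

lemma scott_open_column_mono: "scott_open U \<Longrightarrow> (a, b) \<in> U \<Longrightarrow> b \<le> d \<Longrightarrow> (a, d) \<in> U"
  unfolding scott_open_def by (meson jle_iff)

lemma scott_open_top: "scott_open U \<Longrightarrow> (a, b) \<in> U \<Longrightarrow> b \<le> enat c \<Longrightarrow> (c, \<infinity>) \<in> U"
  unfolding scott_open_def by (meson jle_iff)

lemma scott_open_top_imp_finite: "scott_open U \<Longrightarrow> (c, \<infinity>) \<in> U \<Longrightarrow> \<exists>m. (c, enat m) \<in> U"
  unfolding scott_open_def using j_directed_column j_is_lub_column by blast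

lemma j_directed_bounded_column_greatest:
  assumes dir: "j_directed D" and col: "\<forall>x\<in>D. fst x = c" and bdd: "\<forall>x\<in>D. snd x < enat m"
  obtains k where "(c, enat k) \<in> D" "\<forall>x\<in>D. jle x (c, enat k)"
proof -
  let ?K = "{k. (c, enat k) \<in> D}"
  have D: "\<exists>k. x = (c, enat k) \<and> k < m" if "x \<in> D" for x
    using col bdd that by (metis less_enatE prod.collapse enat_ord_simps(2))
  have "?K \<subseteq> {..<m}" using D by fastforce
  then have "finite ?K" by (rule finite_subset) simp
  moreover have "?K \<noteq> {}" using dir D by (force simp: j_directed_def)
  ultimately have "Max ?K \<in> ?K" "\<forall>k\<in>?K. k \<le> Max ?K" using Max_in Max_ge by blast+
  moreover have "\<forall>x\<in>D. jle x (c, enat (Max ?K))"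
    using D calculation(2) by fastforce
  ultimately show thesis using that by blast
qed

lemma j_directed_single_column:
  assumes "j_directed D" and "\<forall>z\<in>D. snd z \<noteq> \<infinity>" and "x \<in> D" and "y \<in> D"
  shows "fst y = fst x"
proof -
  obtain z where "z \<in> D" "jle x z" "jle y z" using assms(1,3,4) unfolding j_directed_def by blast
  moreover obtain a k where "z = (a, enat k)"
    using assms(2) \<open>z \<in> D\<close> by (metis enat.exhaust prod.collapse snd_conv)
  ultimately show ?thesis by (cases x; cases y) auto
qed

lemma j_lub_notin_directed:
  assumes dir: "j_directed D" and lub: "j_is_lub D s" and "s \<notin> D"
  obtains c where "s = (c, \<infinity>)" "\<forall>x\<in>D. fst x = c" "\<forall>m. \<exists>x\<in>D. enat m \<le> snd x"
proof -
  have ub: "\<And>x. x \<in> D \<Longrightarrow> jle x s" and least: "\<And>u. \<forall>x\<in>D. jle x u \<Longrightarrow> jle s u"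
    using lub by (auto simp: j_is_lub_def)
  obtain c e where s: "s = (c, e)" by fastforce
  obtain x0 where x0: "x0 \<in> D" using dir by (auto simp: j_directed_def)
  have fin: "\<forall>x\<in>D. snd x \<noteq> \<infinity>"
  proof (intro ballI notI)
    fix x assume "x \<in> D" "snd x = \<infinity>"
    then have "x = s" using ub[of x] s by (cases x) auto
    then show False using \<open>x \<in> D\<close> \<open>s \<notin> D\<close> by simp
  qed
  have col: "\<forall>x\<in>D. fst x = fst x0" using j_directed_single_column[OF dir fin x0] by blast
  have unbounded: "\<exists>x\<in>D. enat m \<le> snd x" for m
  proof (rule ccontr)
    assume "\<not> (\<exists>x\<in>D. enat m \<le> snd x)"
    then have "\<forall>x\<in>D. snd x < enat m" by (simp add: not_le)
    then obtain k where "(fst x0, enat k) \<in> D" "\<forall>x\<in>D. jle x (fst x0, enat k)"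
      by (rule j_directed_bounded_column_greatest[OF dir col])
    then have "s = (fst x0, enat k)" by (intro jle_antisym least ub)
    with \<open>(fst x0, enat k) \<in> D\<close> \<open>s \<notin> D\<close> show False by simp
  qed
  have below_s: "fst x0 = c \<and> snd x \<le> e \<or> e = \<infinity> \<and> snd x \<le> enat c" if "x \<in> D" for x
    using ub[OF that] col that s by (metis jle_iff prod.collapse)
  have "c = fst x0"
  proof -
    obtain x where "x \<in> D" "enat (Suc c) \<le> snd x" using unbounded by blast
    then show ?thesis using below_s[of x] by (auto simp: Suc_ile_eq)
  qed
  moreover have "e = \<infinity>"
  proof (rule infinity_if_enat_le_all)
    fix k
    obtain x where "x \<in> D" "enat k \<le> snd x" using unbounded by blast
    then show "enat k \<le> e" using below_s[of x] by (auto intro: order_trans)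
  qed
  ultimately show thesis using that s col unbounded by blast
qed

lemma scott_openI:
  assumes column_mono: "\<And>a b d. (a, b) \<in> U \<Longrightarrow> b \<le> d \<Longrightarrow> (a, d) \<in> U"
    and top: "\<And>a b c. (a, b) \<in> U \<Longrightarrow> b \<le> enat c \<Longrightarrow> (c, \<infinity>) \<in> U"
    and top_imp_finite: "\<And>c. (c, \<infinity>) \<in> U \<Longrightarrow> \<exists>m. (c, enat m) \<in> U"
  shows "scott_open U"
  unfolding scott_open_def
proof (intro conjI allI impI)
  fix x y assume "x \<in> U \<and> jle x y"
  then show "y \<in> U" using column_mono top by (cases x; cases y) auto
next
  fix D s assume "j_directed D \<and> j_is_lub D s \<and> s \<in> U"
  then have dir: "j_directed D" and lub: "j_is_lub D s" and "s \<in> U" by auto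
  show "D \<inter> U \<noteq> {}"
  proof (cases "s \<in> D")
    case False
    then obtain c where s: "s = (c, \<infinity>)" and col: "\<forall>x\<in>D. fst x = c"
      and unbounded: "\<forall>m. \<exists>x\<in>D. enat m \<le> snd x"
      using j_lub_notin_directed[OF dir lub] by blast
    obtain m where "(c, enat m) \<in> U" using top_imp_finite \<open>s \<in> U\<close> s by blast
    moreover obtain x where "x \<in> D" "enat m \<le> snd x" using unbounded by blast
    ultimately have "x \<in> U" using column_mono col by (metis prod.collapse)
    with \<open>x \<in> D\<close> show ?thesis by blast
  qed (use \<open>s \<in> U\<close> in blast)
qed

lemma scott_open_empty: "scott_open {}"
  by (rule scott_openI) auto

lemma scott_open_UNIV: "scott_open UNIV"
  by (rule scott_openI) auto

lemma scott_open_Un: "scott_open U \<Longrightarrow> scott_open V \<Longrightarrow> scott_open (U \<union> V)"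
  by (rule scott_openI) (use scott_open_column_mono scott_open_top scott_open_top_imp_finite in blast)+

lemma scott_open_Int:
  assumes U: "scott_open U" and V: "scott_open V"
  shows "scott_open (U \<inter> V)"
proof (rule scott_openI)
  fix c assume "(c, \<infinity>) \<in> U \<inter> V"
  then obtain m1 m2 where "(c, enat m1) \<in> U" "(c, enat m2) \<in> V"
    using scott_open_top_imp_finite U V by blast
  then have "(c, enat (max m1 m2)) \<in> U \<inter> V"
    using scott_open_column_mono[OF U] scott_open_column_mono[OF V] by simp
  then show "\<exists>m. (c, enat m) \<in> U \<inter> V" by blast
qed (use scott_open_column_mono scott_open_top U V in blast)+

lemma scott_open_nonempty_tops:
  assumes "scott_open V" "V \<noteq> {}"
  obtains K where "\<And>c. K \<le> c \<Longrightarrow> (c, \<infinity>) \<in> V"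
proof -
  obtain a b where "(a, b) \<in> V" using assms(2) by auto
  then obtain m where "(a, enat m) \<in> V"
    using scott_open_top_imp_finite[OF assms(1)] by (cases b) blast+
  then show thesis using that scott_open_top[OF assms(1)] by (metis enat_ord_simps(1))
qed

definition tails :: "nat set \<Rightarrow> nat \<Rightarrow> jpt set" where
  "tails S n = {(c, d). c \<in> S \<and> enat n \<le> d}"

lemma scott_open_Un_tails:
  assumes V: "scott_open V" and tops: "\<And>e. n \<le> e \<Longrightarrow> e \<notin> S \<Longrightarrow> (e, \<infinity>) \<in> V"
  shows "scott_open (V \<union> tails S n)"
proof (rule scott_openI)
  fix c b e assume h: "(c, b) \<in> V \<union> tails S n" "b \<le> enat e"
  show "(e, \<infinity>) \<in> V \<union> tails S n"
  proof (cases "(c, b) \<in> V")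
    case True then show ?thesis using scott_open_top[OF V] h(2) by blast
  next
    case False
    then have "enat n \<le> enat e" using h by (auto simp: tails_def dest: order_trans)
    then show ?thesis using tops by (cases "e \<in> S") (auto simp: tails_def)
  qed
next
  fix c assume "(c, \<infinity>) \<in> V \<union> tails S n"
  then show "\<exists>m. (c, enat m) \<in> V \<union> tails S n"
    using scott_open_top_imp_finite[OF V] by (auto simp: tails_def)
qed (use scott_open_column_mono[OF V] in \<open>auto simp: tails_def\<close>)

text \<open>The bound on the heights keeps \<open>(a, \<infinity>)\<close> out of the upward closure, so the set is open.\<close>
definition off_column :: "nat \<Rightarrow> jpt set" where
  "off_column a = {(c, d). c \<noteq> a \<and> enat a < d}"

lemma scott_open_off_column: "scott_open (off_column a)"
proof (rule scott_openI)
  fix c b e assume "(c, b) \<in> off_column a" "b \<le> enat e"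
  then show "(e, \<infinity>) \<in> off_column a" by (auto simp: off_column_def)
next
  fix c assume "(c, \<infinity>) \<in> off_column a"
  then have "(c, enat (Suc a)) \<in> off_column a" by (simp add: off_column_def)
  then show "\<exists>m. (c, enat m) \<in> off_column a" by blast
qed (auto simp: off_column_def)

lemma scott_open_off_column_tail: "scott_open (off_column a \<union> tails {a} m)"
  by (rule scott_open_Un_tails[OF scott_open_off_column]) (simp add: off_column_def)

lemma scott_open_remove_column_min:
  assumes U: "scott_open U" and below: "\<forall>k<n. (a, enat k) \<notin> U"
  shows "scott_open (U - {(a, enat n)})"
proof (rule scott_openI)
  fix c b d assume h: "(c, b) \<in> U - {(a, enat n)}" "b \<le> d"
  have "(c, d) \<noteq> (a, enat n)"
  proof
    assume "(c, d) = (a, enat n)"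
    with h have "b < enat n" by auto
    with h below \<open>(c, d) = (a, enat n)\<close> show False by (auto elim: less_enatE)
  qed
  then show "(c, d) \<in> U - {(a, enat n)}" using h scott_open_column_mono[OF U] by blast
next
  fix c assume "(c, \<infinity>) \<in> U - {(a, enat n)}"
  then obtain m where m: "(c, enat m) \<in> U" using scott_open_top_imp_finite[OF U] by blast
  then have "(c, enat (Suc m)) \<in> U" using scott_open_column_mono[OF U] by simp
  with m show "\<exists>m. (c, enat m) \<in> U - {(a, enat n)}"
    by (cases "m = n") auto
qed (use scott_open_top[OF U] in blast)

lemma scott_open_Un_columns:
  assumes V: "scott_open V" and U: "scott_open U" and "V \<subseteq> U"
    and tops: "\<And>c. (c, \<infinity>) \<in> U \<Longrightarrow> (c, \<infinity>) \<in> V"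
  shows "scott_open (V \<union> {x \<in> U. fst x \<in> C})"
proof (rule scott_openI)
  fix a b c assume "(a, b) \<in> V \<union> {x \<in> U. fst x \<in> C}" "b \<le> enat c"
  then have "(c, \<infinity>) \<in> U" using \<open>V \<subseteq> U\<close> scott_open_top[OF U] by blast
  then show "(c, \<infinity>) \<in> V \<union> {x \<in> U. fst x \<in> C}" using tops by blast
next
  fix c assume "(c, \<infinity>) \<in> V \<union> {x \<in> U. fst x \<in> C}"
  then show "\<exists>m. (c, enat m) \<in> V \<union> {x \<in> U. fst x \<in> C}"
    using scott_open_top_imp_finite[OF V] scott_open_top_imp_finite[OF U] by force
qed (use scott_open_column_mono[OF V] scott_open_column_mono[OF U] in auto)

lemma finite_Diff_scott_open:
  assumes V: "scott_open V" and tops: "\<And>x. x \<in> A \<Longrightarrow> (fst x, \<infinity>) \<in> V"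
    and "finite (fst ` A)"
  shows "finite (A - V)"
proof -
  have "\<forall>c\<in>fst ` A. \<exists>m. (c, enat m) \<in> V" using tops scott_open_top_imp_finite[OF V] by blast
  then obtain h where h: "\<And>c. c \<in> fst ` A \<Longrightarrow> (c, enat (h c)) \<in> V" by metis
  have "A - V \<subseteq> (\<Union>c\<in>fst ` A. (\<lambda>k. (c, enat k)) ` {..<h c})"
  proof
    fix x assume x: "x \<in> A - V"
    obtain c d where xcd: "x = (c, d)" by fastforce
    have "\<not> enat (h c) \<le> d" using x xcd h scott_open_column_mono[OF V] by force
    then obtain k where "d = enat k" "k < h c" by (cases d) auto
    then show "x \<in> (\<Union>c\<in>fst ` A. (\<lambda>k. (c, enat k)) ` {..<h c})" using x xcd by force
  qed
  moreover have "finite (\<Union>c\<in>fst ` A. (\<lambda>k. (c, enat k)) ` {..<h c})"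
    using \<open>finite (fst ` A)\<close> by (intro finite_UN_I) auto
  ultimately show ?thesis by (rule finite_subset)
qed

section \<open>Weights of the points\<close>

locale bounded_continuous_valuation =
  fixes \<nu> :: "jpt set \<Rightarrow> ennreal"
  assumes continuous: "continuous_valuation \<nu>" and bounded: "bounded_valuation \<nu>"
begin

lemma nu_empty: "\<nu> {} = 0"
  using continuous by (simp add: continuous_valuation_def valuation_def)

lemma nu_mono: "scott_open U \<Longrightarrow> scott_open V \<Longrightarrow> U \<subseteq> V \<Longrightarrow> \<nu> U \<le> \<nu> V"
  using continuous by (simp add: continuous_valuation_def valuation_def)

lemma nu_modular: "scott_open U \<Longrightarrow> scott_open V \<Longrightarrow> \<nu> U + \<nu> V = \<nu> (U \<union> V) + \<nu> (U \<inter> V)"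
  using continuous by (simp add: continuous_valuation_def valuation_def)

lemma nu_finite: "scott_open U \<Longrightarrow> \<nu> U < \<infinity>"
  using nu_mono[OF _ scott_open_UNIV, of U] bounded by (auto simp: bounded_valuation_def)

lemma nu_incseq_Union:
  assumes inc: "incseq W" and W: "\<And>j. scott_open (W j)"
  shows "\<nu> (\<Union>j. W j) = (SUP j. \<nu> (W j))"
proof -
  have "\<exists>C\<in>range W. A \<subseteq> C \<and> B \<subseteq> C" if AB: "A \<in> range W" "B \<in> range W" for A B
  proof -
    obtain i j where "A = W i" "B = W j" using AB by blast
    then show ?thesis using inc by (metis incseqD max.cobounded1 max.cobounded2 rangeI)
  qed
  then show ?thesis using continuous W unfolding continuous_valuation_def by (auto simp: image_image)
qed

definition mass :: "jpt set \<Rightarrow> real" where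
  "mass U = enn2real (\<nu> U)"

lemma ennreal_mass: "scott_open U \<Longrightarrow> ennreal (mass U) = \<nu> U"
  using nu_finite by (simp add: mass_def)

lemma mass_nonneg: "0 \<le> mass U"
  by (simp add: mass_def)

lemma mass_mono: "scott_open U \<Longrightarrow> scott_open V \<Longrightarrow> U \<subseteq> V \<Longrightarrow> mass U \<le> mass V"
  unfolding mass_def using nu_mono nu_finite by (simp add: enn2real_mono)

lemma mass_modular:
  assumes "scott_open U" "scott_open V"
  shows "mass U + mass V = mass (U \<union> V) + mass (U \<inter> V)"
proof -
  have "ennreal (mass U + mass V) = ennreal (mass (U \<union> V) + mass (U \<inter> V))"
    using nu_modular[OF assms] assms scott_open_Un scott_open_Int
    by (simp add: ennreal_plus mass_nonneg ennreal_mass)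
  then show ?thesis by (simp del: ennreal_plus add: mass_nonneg add_nonneg_nonneg)
qed

definition tail_gain :: "nat \<Rightarrow> nat \<Rightarrow> real" where
  "tail_gain a m = mass (off_column a \<union> tails {a} m) - mass (off_column a)"

lemma mass_add_tail:
  assumes V: "scott_open V" and disj: "\<And>d. (a, d) \<notin> V" and Z: "scott_open (V \<union> tails {a} m)"
  shows "mass (V \<union> tails {a} m) = mass V + tail_gain a m"
proof -
  let ?T = "tails {a} m" and ?O = "off_column a"
  have I_eq: "(V \<inter> ?O) \<union> ?T = (V \<union> ?T) \<inter> (?O \<union> ?T)" by blast
  have I: "scott_open ((V \<inter> ?O) \<union> ?T)"
    unfolding I_eq by (intro scott_open_Int Z scott_open_off_column_tail)
  have "V \<inter> ?T = {}" "?O \<inter> ?T = {}" using disj by (auto simp: tails_def off_column_def)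
  then have "V \<union> ((V \<inter> ?O) \<union> ?T) = V \<union> ?T" "V \<inter> ((V \<inter> ?O) \<union> ?T) = V \<inter> ?O"
    "?O \<union> ((V \<inter> ?O) \<union> ?T) = ?O \<union> ?T" "?O \<inter> ((V \<inter> ?O) \<union> ?T) = V \<inter> ?O"
    by blast+
  then have "mass V + mass ((V \<inter> ?O) \<union> ?T) = mass (V \<union> ?T) + mass (V \<inter> ?O)"
    and "mass ?O + mass ((V \<inter> ?O) \<union> ?T) = mass (?O \<union> ?T) + mass (V \<inter> ?O)"
    using mass_modular[OF V I] mass_modular[OF scott_open_off_column I] by simp_all
  then show ?thesis unfolding tail_gain_def by linarith
qed

lemma tail_gain_nonneg: "0 \<le> tail_gain a m"
  unfolding tail_gain_def
  using mass_mono[OF scott_open_off_column scott_open_off_column_tail] by simp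

lemma tail_gain_Suc_le: "tail_gain a (Suc m) \<le> tail_gain a m"
proof -
  have "off_column a \<union> tails {a} (Suc m) \<subseteq> off_column a \<union> tails {a} m"
    by (auto simp: tails_def Suc_ile_eq)
  then show ?thesis unfolding tail_gain_def
    using mass_mono[OF scott_open_off_column_tail scott_open_off_column_tail] by force
qed

definition column_weight :: "nat \<Rightarrow> nat \<Rightarrow> real" where
  "column_weight a n = tail_gain a n - tail_gain a (Suc n)"

lemma column_weight_nonneg: "0 \<le> column_weight a n"
  using tail_gain_Suc_le by (simp add: column_weight_def)

lemma nu_remove_point:
  assumes U: "scott_open U" and x: "(a, enat n) \<in> U" and U': "scott_open (U - {(a, enat n)})"
  shows "\<nu> U = \<nu> (U - {(a, enat n)}) + ennreal (column_weight a n)"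
proof -
  let ?x = "(a, enat n)" and ?Y = "\<lambda>k. off_column a \<union> tails {a} k"
  have W: "scott_open (U \<inter> ?Y n)" by (intro scott_open_Int U scott_open_off_column_tail)
  have "tails {a} n - {?x} = tails {a} (Suc n)"
    by (auto simp: tails_def Suc_ile_eq order_less_le)
  then have "?Y n - {?x} = ?Y (Suc n)" by (auto simp: off_column_def)
  moreover have "?x \<in> ?Y n" by (simp add: tails_def)
  ultimately have "(U - {?x}) \<union> (U \<inter> ?Y n) = U" "(U - {?x}) \<inter> (U \<inter> ?Y n) = U \<inter> ?Y (Suc n)"
    "?Y (Suc n) \<union> (U \<inter> ?Y n) = ?Y n" "?Y (Suc n) \<inter> (U \<inter> ?Y n) = U \<inter> ?Y (Suc n)"
    using x by blast+
  then have "mass (U - {?x}) + mass (U \<inter> ?Y n) = mass U + mass (U \<inter> ?Y (Suc n))"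
    and "mass (?Y (Suc n)) + mass (U \<inter> ?Y n) = mass (?Y n) + mass (U \<inter> ?Y (Suc n))"
    using mass_modular[OF U' W] mass_modular[OF scott_open_off_column_tail W] by simp_all
  then have "mass U = mass (U - {?x}) + column_weight a n"
    unfolding column_weight_def tail_gain_def by linarith
  then show ?thesis
    using ennreal_mass[OF U] ennreal_mass[OF U'] column_weight_nonneg mass_nonneg
    by (simp add: ennreal_plus)
qed

definition top_weight :: "nat \<Rightarrow> real" where
  "top_weight a = (INF m. tail_gain a m)"

lemma tail_gain_tendsto: "tail_gain a \<longlonglongrightarrow> top_weight a"
  unfolding top_weight_def
  by (rule LIMSEQ_decseq_INF) (auto intro: bdd_belowI2 tail_gain_nonneg decseq_SucI tail_gain_Suc_le)

lemma top_weight_nonneg: "0 \<le> top_weight a"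
  unfolding top_weight_def by (rule cINF_greatest) (auto intro: tail_gain_nonneg)

lemma top_weight_le_tail_gain: "top_weight a \<le> tail_gain a m"
  unfolding top_weight_def by (rule cINF_lower) (auto intro: tail_gain_nonneg)

fun weight :: "jpt \<Rightarrow> real" where
  "weight (a, enat n) = column_weight a n"
| "weight (a, \<infinity>) = top_weight a"

lemma weight_nonneg: "0 \<le> weight x"
  by (cases x rule: weight.cases) (simp_all add: column_weight_nonneg top_weight_nonneg)

definition weight_measure :: "jpt measure" where
  "weight_measure = density (count_space UNIV) (\<lambda>x. ennreal (weight x))"

abbreviation \<theta> :: "jpt set \<Rightarrow> ennreal" where
  "\<theta> \<equiv> emeasure weight_measure"

lemma sets_weight_measure [simp]: "sets weight_measure = UNIV"
  by (simp add: weight_measure_def)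

lemma emeasure_weight_measure: "\<theta> S = (\<integral>\<^sup>+x. ennreal (weight x) * indicator S x \<partial>count_space UNIV)"
  by (simp add: weight_measure_def emeasure_density)

lemma emeasure_weight_singleton: "\<theta> {x} = ennreal (weight x)"
  by (simp add: emeasure_weight_measure)

lemma emeasure_weight_tail: "\<theta> (tails {a} n) = ennreal (tail_gain a n)"
proof -
  let ?pt = "\<lambda>k. {(a, enat (k + n))}"
  have "(\<lambda>k. tail_gain a (k + n)) \<longlonglongrightarrow> top_weight a"
    by (rule LIMSEQ_ignore_initial_segment[OF tail_gain_tendsto])
  then have sums: "(\<lambda>k. column_weight a (k + n)) sums (tail_gain a n - top_weight a)"
    using telescope_sums' by (fastforce simp: column_weight_def)
  have "\<theta> (\<Union>k. ?pt k) = (\<Sum>k. \<theta> (?pt k))"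
    by (rule suminf_emeasure[symmetric]) (auto simp: disjoint_family_on_def)
  also have "\<dots> = ennreal (\<Sum>k. column_weight a (k + n))"
    using suminf_ennreal2[OF column_weight_nonneg sums_summable[OF sums]]
    by (simp add: emeasure_weight_singleton)
  also have "\<dots> = ennreal (tail_gain a n - top_weight a)"
    using sums by (simp add: sums_unique[symmetric])
  finally have fin: "\<theta> (\<Union>k. ?pt k) = ennreal (tail_gain a n - top_weight a)" .
  have tails_eq: "tails {a} n = insert (a, \<infinity>) (\<Union>k. ?pt k)"
  proof (rule set_eqI)
    fix x :: jpt
    obtain c d where "x = (c, d)" by fastforce
    then show "x \<in> tails {a} n \<longleftrightarrow> x \<in> insert (a, \<infinity>) (\<Union>k. ?pt k)"
      by (cases d) (auto simp: tails_def nat_le_iff_add add.commute)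
  qed
  have "\<theta> (tails {a} n) = \<theta> {(a, \<infinity>)} + \<theta> (\<Union>k. ?pt k)"
    unfolding tails_eq by (rule emeasure_insert) auto
  also have "\<dots> = ennreal (top_weight a) + ennreal (tail_gain a n - top_weight a)"
    by (simp only: emeasure_weight_singleton fin weight.simps)
  also have "\<dots> = ennreal (top_weight a + (tail_gain a n - top_weight a))"
    using top_weight_nonneg top_weight_le_tail_gain[of a n] by (intro ennreal_plus[symmetric]) auto
  finally show ?thesis by (metis add.commute diff_add_cancel)
qed

section \<open>Decomposition of the valuation\<close>

lemma nu_add_column_tail:
  assumes V: "scott_open V" and disj: "\<And>d. (a, d) \<notin> V" and Z: "scott_open (V \<union> tails {a} n)"
  shows "\<nu> (V \<union> tails {a} n) = \<nu> V + \<theta> (tails {a} n)"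
proof -
  have "\<nu> (V \<union> tails {a} n) = ennreal (mass V + tail_gain a n)"
    using mass_add_tail[OF V disj Z] ennreal_mass[OF Z] by simp
  then show ?thesis
    using ennreal_mass[OF V] mass_nonneg tail_gain_nonneg by (simp add: emeasure_weight_tail)
qed

lemma nu_add_tails:
  assumes V: "scott_open V" and "finite S" and disj: "\<And>c d. c \<in> S \<Longrightarrow> (c, d) \<notin> V"
    and tops: "\<And>e. n \<le> e \<Longrightarrow> (e, \<infinity>) \<in> V"
  shows "\<nu> (V \<union> tails S n) = \<nu> V + \<theta> (tails S n)"
  using \<open>finite S\<close> disj
proof (induction S rule: finite_induct)
  case empty
  then show ?case by (simp add: tails_def)
next
  case (insert a S)
  have open_tails: "scott_open (V \<union> tails S' n)" for S'
    using scott_open_Un_tails[OF V] tops by blast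
  have "tails (insert a S) n = tails S n \<union> tails {a} n"
    and disj_a: "tails S n \<inter> tails {a} n = {}"
    using insert.hyps(2) by (auto simp: tails_def)
  then have split: "V \<union> tails (insert a S) n = (V \<union> tails S n) \<union> tails {a} n"
    and "\<theta> (tails (insert a S) n) = \<theta> (tails S n) + \<theta> (tails {a} n)"
    by (auto intro: plus_emeasure[symmetric])
  moreover have "(a, d) \<notin> V \<union> tails S n" for d
    using insert by (auto simp: tails_def)
  ultimately show ?case
    using nu_add_column_tail[OF open_tails] open_tails[of "insert a S"] insert
    by (simp add: add.assoc)
qed

lemma nu_add_finite:
  assumes "finite D" and V: "scott_open V" and "scott_open (V \<union> D)" and "V \<inter> D = {}"
    and "\<And>x. x \<in> D \<Longrightarrow> snd x \<noteq> \<infinity>"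
  shows "\<nu> (V \<union> D) = \<nu> V + \<theta> D"
  using assms(1,3-)
proof (induction D rule: finite_remove_induct)
  case empty
  then show ?case by simp
next
  case (remove D)
  define h where "h = Min (snd ` D)"
  have "h \<in> snd ` D" unfolding h_def using remove.hyps by (intro Min_in) auto
  then obtain x where "x \<in> D" "snd x = h" by blast
  have lowest: "snd x \<le> snd y" if "y \<in> D" for y
    using that remove.hyps \<open>snd x = h\<close> by (simp add: h_def)
  obtain a d where "x = (a, d)" by fastforce
  moreover obtain n where "d = enat n" using remove.prems(3)[OF \<open>x \<in> D\<close>] \<open>x = (a, d)\<close> by (cases d) auto
  ultimately have x: "x = (a, enat n)" by simp
  have "\<forall>k<n. (a, enat k) \<notin> V \<union> D"
  proof (intro allI impI notI)
    fix k assume "k < n" "(a, enat k) \<in> V \<union> D"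
    moreover have "(a, enat k) \<notin> D" using lowest[of "(a, enat k)"] x \<open>k < n\<close> by auto
    ultimately have "x \<in> V" using scott_open_column_mono[OF V, of a "enat k" "enat n"] x \<open>k < n\<close> by auto
    then show False using \<open>x \<in> D\<close> \<open>V \<inter> D = {}\<close> by blast
  qed
  moreover have eq: "V \<union> (D - {x}) = (V \<union> D) - {x}" using \<open>x \<in> D\<close> \<open>V \<inter> D = {}\<close> by blast
  ultimately have "scott_open ((V \<union> D) - {x})"
    using scott_open_remove_column_min[OF remove.prems(1)] x by simp
  then have open': "scott_open (V \<union> (D - {x}))" by (simp only: eq)
  have "\<nu> (V \<union> D) = \<nu> (V \<union> (D - {x})) + \<theta> {x}"
    unfolding eq using nu_remove_point[OF remove.prems(1) _ \<open>scott_open ((V \<union> D) - {x})\<close>[unfolded x]]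
      x \<open>x \<in> D\<close> by (simp add: emeasure_weight_singleton)
  also have "\<nu> (V \<union> (D - {x})) = \<nu> V + \<theta> (D - {x})"
    using remove.IH[OF \<open>x \<in> D\<close> open'] remove.prems by blast
  also have "\<nu> V + \<theta> (D - {x}) + \<theta> {x} = \<nu> V + \<theta> D"
    using emeasure_insert[of x weight_measure "D - {x}"] \<open>x \<in> D\<close>
    by (simp add: add.assoc add.commute insert_absorb)
  finally show ?case .
qed

lemma nu_eq_add_Diff_of_tops:
  assumes U: "scott_open U" and V: "scott_open V" and "V \<subseteq> U"
    and tops: "\<And>c. (c, \<infinity>) \<in> U \<Longrightarrow> (c, \<infinity>) \<in> V"
  shows "\<nu> U = \<nu> V + \<theta> (U - V)"
proof -
  define D where "D j = {x \<in> U. fst x < j} - V" for j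
  have VD: "V \<union> D j = V \<union> {x \<in> U. fst x \<in> {..<j}}" for j by (auto simp: D_def)
  have open_VD: "scott_open (V \<union> D j)" for j
    unfolding VD using scott_open_Un_columns[OF V U \<open>V \<subseteq> U\<close> tops] .
  have "finite (D j)" for j
    unfolding D_def
  proof (rule finite_Diff_scott_open[OF V])
    show "finite (fst ` {x \<in> U. fst x < j})" by (rule finite_subset[of _ "{..<j}"]) auto
  qed (use tops scott_open_column_mono[OF U] in \<open>force\<close>)
  moreover have "snd x \<noteq> \<infinity>" if "x \<in> D j" for x j
  proof
    assume "snd x = \<infinity>"
    then have "x = (fst x, \<infinity>)" by (simp add: prod_eq_iff)
    with that have "(fst x, \<infinity>) \<in> U - V" by (auto simp: D_def)
    then show False using tops by blast
  qed
  ultimately have nu_VD: "\<nu> (V \<union> D j) = \<nu> V + \<theta> (D j)" for j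
    using nu_add_finite[OF _ V open_VD] by (auto simp: D_def)
  have "incseq D" by (auto simp: incseq_def D_def)
  moreover have "(\<Union>j. D j) = U - V" by (auto simp: D_def)
  ultimately have union: "(\<Union>j. V \<union> D j) = U" and inc: "incseq (\<lambda>j. V \<union> D j)"
    using \<open>V \<subseteq> U\<close> by (auto simp: incseq_def)
  have "\<nu> U = (SUP j. \<nu> (V \<union> D j))"
    using nu_incseq_Union[OF inc open_VD] by (simp only: union)
  also have "\<dots> = (SUP j. \<nu> V + \<theta> (D j))" by (simp only: nu_VD)
  also have "\<dots> = \<nu> V + (SUP j. \<theta> (D j))" by (simp add: ennreal_SUP_add_right)
  also have "(SUP j. \<theta> (D j)) = \<theta> (U - V)"
    using SUP_emeasure_incseq[of D] \<open>incseq D\<close> \<open>(\<Union>j. D j) = U - V\<close> by simp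
  finally show ?thesis .
qed

lemma nu_add_missing_tops:
  assumes U: "scott_open U" and V: "scott_open V" and "V \<subseteq> U" and "V \<noteq> {}"
  obtains V' where "scott_open V'" "V \<subseteq> V'" "V' \<subseteq> U" "\<And>c. (c, \<infinity>) \<in> U \<Longrightarrow> (c, \<infinity>) \<in> V'"
    "\<nu> V' = \<nu> V + \<theta> (V' - V)"
proof -
  obtain K where K: "\<And>c. K \<le> c \<Longrightarrow> (c, \<infinity>) \<in> V"
    using scott_open_nonempty_tops[OF V \<open>V \<noteq> {}\<close>] by blast
  define C where "C = {c. (c, \<infinity>) \<in> U \<and> (c, \<infinity>) \<notin> V}"
  have "C \<subseteq> {..<K}"
  proof
    fix c assume "c \<in> C"
    then have "\<not> K \<le> c" using K by (auto simp: C_def)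
    then show "c \<in> {..<K}" by simp
  qed
  then have "finite C" by (rule finite_subset) simp
  have "\<forall>c\<in>C. \<exists>m. (c, enat m) \<in> U" using scott_open_top_imp_finite[OF U] by (auto simp: C_def)
  then obtain f where f: "\<And>c. c \<in> C \<Longrightarrow> (c, enat (f c)) \<in> U" by metis
  define n where "n = Max (insert K (f ` C))"
  have tops_n: "\<And>e. n \<le> e \<Longrightarrow> (e, \<infinity>) \<in> V" using K \<open>finite C\<close> by (simp add: n_def)
  have f_n: "\<And>c. c \<in> C \<Longrightarrow> f c \<le> n" using \<open>finite C\<close> by (simp add: n_def)
  have disj: "\<And>c d. c \<in> C \<Longrightarrow> (c, d) \<notin> V"
    using scott_open_column_mono[OF V] by (force simp: C_def)
  show thesis
  proof (rule that)
    show "scott_open (V \<union> tails C n)" using scott_open_Un_tails[OF V] tops_n by blast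
    have "tails C n \<subseteq> U"
    proof
      fix x assume "x \<in> tails C n"
      then obtain c d where x: "x = (c, d)" "c \<in> C" "enat n \<le> d" by (auto simp: tails_def)
      then have "enat (f c) \<le> d" using f_n[of c] by (metis enat_ord_simps(1) order_trans)
      then show "x \<in> U" using x f scott_open_column_mono[OF U] by blast
    qed
    then show "V \<union> tails C n \<subseteq> U" using \<open>V \<subseteq> U\<close> by blast
    show "(c, \<infinity>) \<in> V \<union> tails C n" if "(c, \<infinity>) \<in> U" for c
      using that by (auto simp: C_def tails_def)
    have "V \<union> tails C n - V = tails C n" using disj by (auto simp: tails_def)
    then show "\<nu> (V \<union> tails C n) = \<nu> V + \<theta> (V \<union> tails C n - V)"
      using nu_add_tails[OF V \<open>finite C\<close> disj tops_n] by simp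
  qed simp
qed

lemma nu_eq_add_Diff:
  assumes U: "scott_open U" and V: "scott_open V" and "V \<subseteq> U" and "V \<noteq> {}"
  shows "\<nu> U = \<nu> V + \<theta> (U - V)"
proof -
  obtain V' where V': "scott_open V'" "V \<subseteq> V'" "V' \<subseteq> U"
    and tops: "\<And>c. (c, \<infinity>) \<in> U \<Longrightarrow> (c, \<infinity>) \<in> V'" and nu_V': "\<nu> V' = \<nu> V + \<theta> (V' - V)"
    using nu_add_missing_tops[OF assms] by blast
  have "\<nu> U = \<nu> V' + \<theta> (U - V')" by (rule nu_eq_add_Diff_of_tops[OF U V'(1,3) tops])
  also have "\<dots> = \<nu> V + (\<theta> (V' - V) + \<theta> (U - V'))" by (simp add: nu_V' add.assoc)
  also have "\<theta> (V' - V) + \<theta> (U - V') = \<theta> (U - V)"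
    using V' by (subst plus_emeasure) (auto intro: arg_cong[where f = \<theta>])
  finally show ?thesis .
qed

lemma emeasure_weight_UNIV_le: "\<theta> UNIV \<le> \<nu> UNIV"
proof -
  let ?T = "\<lambda>k. tails {k..} k"
  have bound: "\<theta> (UNIV - ?T k) \<le> \<nu> UNIV" for k
  proof -
    have "scott_open (?T k)" using scott_open_Un_tails[OF scott_open_empty, of k "{k..}"] by simp
    moreover have "(k, \<infinity>) \<in> ?T k" by (simp add: tails_def)
    ultimately have "\<nu> UNIV = \<nu> (?T k) + \<theta> (UNIV - ?T k)"
      by (intro nu_eq_add_Diff scott_open_UNIV) auto
    then show ?thesis by simp
  qed
  have inc: "incseq (\<lambda>k. UNIV - ?T k)"
    by (auto simp: incseq_def tails_def) (meson enat_ord_simps(1) order_trans)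
  have union: "(\<Union>k. UNIV - ?T k) = UNIV"
  proof -
    have "x \<in> UNIV - ?T (Suc (fst x))" for x by (auto simp: tails_def)
    then show ?thesis by blast
  qed
  have "\<theta> UNIV = (SUP k. \<theta> (UNIV - ?T k))"
    using SUP_emeasure_incseq[OF _ inc] union by simp
  also have "\<dots> \<le> \<nu> UNIV" using bound by (rule SUP_least)
  finally show ?thesis .
qed

lemma emeasure_weight_finite: "\<theta> S < \<infinity>"
proof -
  have "\<theta> S \<le> \<theta> UNIV" by (rule emeasure_mono) simp_all
  also have "\<dots> \<le> \<nu> UNIV" by (rule emeasure_weight_UNIV_le)
  also have "\<dots> < \<infinity>" by (rule nu_finite[OF scott_open_UNIV])
  finally show ?thesis .
qed

definition diffuse_mass :: real where
  "diffuse_mass = mass UNIV - enn2real (\<theta> UNIV)"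

lemma diffuse_mass_nonneg: "0 \<le> diffuse_mass"
  unfolding diffuse_mass_def mass_def
  using emeasure_weight_UNIV_le nu_finite[OF scott_open_UNIV] by (simp add: enn2real_mono)

lemma nu_eq_discrete_plus_diffuse:
  assumes U: "scott_open U" and "U \<noteq> {}"
  shows "\<nu> U = \<theta> U + ennreal diffuse_mass"
proof -
  have "\<nu> UNIV = \<nu> U + \<theta> (UNIV - U)"
    using assms by (intro nu_eq_add_Diff scott_open_UNIV) auto
  then have "mass UNIV = mass U + enn2real (\<theta> (UNIV - U))"
    unfolding mass_def using nu_finite[OF U] emeasure_weight_finite by (simp add: enn2real_plus)
  moreover have "\<theta> UNIV = \<theta> U + \<theta> (UNIV - U)" by (subst plus_emeasure) auto
  then have "enn2real (\<theta> UNIV) = enn2real (\<theta> U) + enn2real (\<theta> (UNIV - U))"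
    using emeasure_weight_finite by (simp add: enn2real_plus)
  ultimately have "mass U = enn2real (\<theta> U) + diffuse_mass" by (simp add: diffuse_mass_def)
  then show ?thesis
    using ennreal_mass[OF U] diffuse_mass_nonneg emeasure_weight_finite[of U]
    by (simp add: ennreal_plus)
qed

lemma discrete_valuation_weight: "discrete_valuation \<theta>"
proof -
  define x where "x = from_nat_into (UNIV :: jpt set)"
  have "bij_betw x UNIV UNIV" unfolding x_def
    by (rule bij_betw_from_nat_into) (simp_all add: finite_prod)
  then have "\<theta> U = (\<Sum>i. ennreal (weight (x i)) * dirac (x i) U)" for U
    using nn_integral_bij_count_space[of x UNIV UNIV "\<lambda>y. ennreal (weight y) * indicator U y"]
    by (simp add: emeasure_weight_measure nn_integral_count_space_nat dirac_def indicator_def of_bool_def)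
  then show ?thesis unfolding discrete_valuation_def
    by (intro exI[of _ "\<lambda>i. weight (x i)"] exI[of _ x]) (simp add: weight_nonneg)
qed

lemma emeasure_weight_inner_finite:
  assumes "c < \<theta> U + r"
  obtains A where "finite A" "A \<subseteq> U" "c < \<theta> A + r"
proof -
  define A where "A n = U \<inter> ({..<n} \<times> insert \<infinity> (enat ` {..<n}))" for n
  have "incseq A" by (auto simp: incseq_def A_def)
  have "x \<in> A (Suc (fst x + (case snd x of enat k \<Rightarrow> k | \<infinity> \<Rightarrow> 0)))" if "x \<in> U" for x
    using that by (cases x; cases "snd x") (auto simp: A_def)
  then have "U \<subseteq> (\<Union>n. A n)" by blast
  then have "(\<Union>n. A n) = U" by (auto simp: A_def)
  then have "\<theta> U + r = (SUP n. \<theta> (A n) + r)"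
    using SUP_emeasure_incseq[OF _ \<open>incseq A\<close>] by (simp add: ennreal_SUP_add_left)
  then obtain n where "c < \<theta> (A n) + r" using assms by (auto simp: less_SUP_iff)
  moreover have "finite (A n)" "A n \<subseteq> U" by (auto simp: A_def)
  ultimately show thesis using that by blast
qed

lemma point_continuous_nu: "point_continuous \<nu>"
  unfolding point_continuous_def
proof (intro allI impI)
  fix U r assume "scott_open U \<and> 0 \<le> r \<and> ennreal r < \<nu> U"
  then have U: "scott_open U" and r: "ennreal r < \<nu> U" by auto
  then have "U \<noteq> {}" using nu_empty by auto
  then obtain x0 where "x0 \<in> U" by blast
  have "ennreal r < \<theta> U + ennreal diffuse_mass"
    using r nu_eq_discrete_plus_diffuse[OF U \<open>U \<noteq> {}\<close>] by simp
  then obtain A where "finite A" "A \<subseteq> U" and A: "ennreal r < \<theta> A + ennreal diffuse_mass"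
    by (rule emeasure_weight_inner_finite)
  show "\<exists>A. finite A \<and> A \<subseteq> U \<and> (\<forall>V. scott_open V \<and> A \<subseteq> V \<longrightarrow> ennreal r < \<nu> V)"
  proof (intro exI conjI allI impI)
    \<comment> \<open>\<open>x0\<close> makes every admissible \<open>V\<close> nonempty, which the decomposition of \<open>\<nu> V\<close> needs.\<close>
    show "finite (insert x0 A)" "insert x0 A \<subseteq> U" using \<open>finite A\<close> \<open>A \<subseteq> U\<close> \<open>x0 \<in> U\<close> by auto
    fix V assume "scott_open V \<and> insert x0 A \<subseteq> V"
    then have "scott_open V" "V \<noteq> {}" "A \<subseteq> V" by auto
    then have "\<theta> A + ennreal diffuse_mass \<le> \<nu> V"
      by (subst nu_eq_discrete_plus_diffuse) (auto intro: add_right_mono emeasure_mono)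
    with A show "ennreal r < \<nu> V" by simp
  qed
qed

end

theorem theorem3p4:
  fixes \<nu> :: "jpt set \<Rightarrow> ennreal"
  assumes "continuous_valuation \<nu>" and "bounded_valuation \<nu>"
  shows "point_continuous \<nu> \<and>
    (\<exists>\<theta> (r::real). discrete_valuation \<theta> \<and> 0 \<le> r \<and>
       (\<forall>U. scott_open U \<longrightarrow> \<nu> U = \<theta> U + ennreal r * mu_J U))"
proof -
  interpret bounded_continuous_valuation \<nu> using assms by unfold_locales
  have "\<nu> U = \<theta> U + ennreal diffuse_mass * mu_J U" if "scott_open U" for U
    using that nu_eq_discrete_plus_diffuse by (cases "U = {}") (simp_all add: nu_empty mu_J_def)
  then show ?thesis using point_continuous_nu discrete_valuation_weight diffuse_mass_nonneg by blast
qed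

end
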